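(* A positive word $A$ in the band generators represents a canonical factor (i.e. $e\le A\le\delta$) if and only if $A$ contains no obstructing pair, i.e. $A$ has no decomposition $A=BaCbD$ with $B,C,D$ positive words (possibly empty), $a,b$ band generators and $(a,b)$ an obstructing pair.
   Context: $B_n$ is the $n$-string braid group with band generators $a_{ts}=(\sigma_{t-1}\cdots\sigma_{s+1})\sigma_s(\sigma_{s+1}^{-1}\cdots\sigma_{t-1}^{-1})$, $n\ge t>s\ge1$; $e$ is the identity. $\delta=a_{n(n-1)}\cdots a_{21}$. For $V,W\in B_n$, $V\le W$ means $W=P_1VP_2$ with $P_1,P_2$ represented by positive words. An ordered pair $(a,b)$ of band generators is an obstructing pair if, for some integers $n\ge t>s>r>q\ge1$, it is one of: (1) $(a_{tr},a_{sq})$; (2) $(a_{sq},a_{tr})$; (3) $(a_{sr},a_{ts})$; (4) $(a_{ts},a_{tr})$; (5) $(a_{tr},a_{sr})$; (6) $(a_{ts},a_{ts})$. *)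

theory Defs
  imports Main
begin

text \<open>Words in the Artin generators: a letter (i, True) is sigma_i, (i, False) is sigma_i^-1.\<close>
type_synonym art_word = "(nat \<times> bool) list"

inductive braid_eq :: "nat \<Rightarrow> art_word \<Rightarrow> art_word \<Rightarrow> bool" for n where
  refl: "braid_eq n u u"
| sym: "braid_eq n u v \<Longrightarrow> braid_eq n v u"
| trans: "braid_eq n u v \<Longrightarrow> braid_eq n v w \<Longrightarrow> braid_eq n u w"
| cong: "braid_eq n u v \<Longrightarrow> braid_eq n (x @ u @ y) (x @ v @ y)"
| cancel: "1 \<le> i \<Longrightarrow> i < n \<Longrightarrow> braid_eq n [(i, b), (i, \<not> b)] []"
| comm: "1 \<le> i \<Longrightarrow> i < n \<Longrightarrow> 1 \<le> j \<Longrightarrow> j < n \<Longrightarrow> i + 2 \<le> j \<Longrightarrow>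
          braid_eq n [(i, True), (j, True)] [(j, True), (i, True)]"
| braid: "1 \<le> i \<Longrightarrow> i + 1 < n \<Longrightarrow>
          braid_eq n [(i, True), (i+1, True), (i, True)] [(i+1, True), (i, True), (i+1, True)]"

text \<open>Band generator a_{ts} = (sigma_{t-1} ... sigma_{s+1}) sigma_s (sigma_{s+1}^-1 ... sigma_{t-1}^-1).\<close>
definition band_word :: "nat \<Rightarrow> nat \<Rightarrow> art_word" where
  "band_word t s = map (\<lambda>i. (i, True)) (rev [s+1..<t]) @ [(s, True)] @ map (\<lambda>i. (i, False)) [s+1..<t]"

definition band_gens :: "nat \<Rightarrow> (nat \<times> nat) set" where
  "band_gens n = {(t, s). 1 \<le> s \<and> s < t \<and> t \<le> n}"

definition positive_word :: "nat \<Rightarrow> (nat \<times> nat) list \<Rightarrow> bool" where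
  "positive_word n P \<longleftrightarrow> set P \<subseteq> band_gens n"

definition eval_band :: "(nat \<times> nat) list \<Rightarrow> art_word" where
  "eval_band P = concat (map (\<lambda>(t, s). band_word t s) P)"

definition delta :: "nat \<Rightarrow> (nat \<times> nat) list" where
  "delta n = map (\<lambda>k. (k + 1, k)) (rev [1..<n])"

definition braid_le :: "nat \<Rightarrow> art_word \<Rightarrow> art_word \<Rightarrow> bool" where
  "braid_le n V W \<longleftrightarrow>
     (\<exists>P1 P2. positive_word n P1 \<and> positive_word n P2 \<and> braid_eq n W (eval_band P1 @ V @ eval_band P2))"

definition canonical_factor :: "nat \<Rightarrow> (nat \<times> nat) list \<Rightarrow> bool" where
  "canonical_factor n A \<longleftrightarrow> braid_le n [] (eval_band A) \<and> braid_le n (eval_band A) (eval_band (delta n))"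

text \<open>Obstructing pairs; each case only requires the indices it mentions.\<close>
definition obstructing :: "nat \<Rightarrow> nat \<times> nat \<Rightarrow> nat \<times> nat \<Rightarrow> bool" where
  "obstructing n a b \<longleftrightarrow>
     (\<exists>t s r q. n \<ge> t \<and> t > s \<and> s > r \<and> r > q \<and> q \<ge> 1 \<and>
        ((a, b) = ((t, r), (s, q)) \<or> (a, b) = ((s, q), (t, r)))) \<or>
     (\<exists>t s r. n \<ge> t \<and> t > s \<and> s > r \<and> r \<ge> 1 \<and>
        ((a, b) = ((s, r), (t, s)) \<or> (a, b) = ((t, s), (t, r)) \<or> (a, b) = ((t, r), (s, r)))) \<or>
     (\<exists>t s. n \<ge> t \<and> t > s \<and> s \<ge> 1 \<and> (a, b) = ((t, s), (t, s)))"

end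

theory Submission
  imports Defs "HOL-Combinatorics.Transposition"
begin

(* Following Birman, Ko and Lee, canonical factors correspond to noncrossing partitions of
   {1..n}: each block contributes the product of the band generators joining consecutive
   elements of the block, and delta is the word of the partition with a single block.
   Splitting a block along a chord (t, s) into its elements in (s, t] and the remaining ones
   keeps the partition noncrossing and factors a_ts off the left of its word.  A letter a_pq
   of a later word survives this split inside one block exactly when a_ts does not obstruct
   it, so an obstruction-free word can be peeled off delta letter by letter.
   Conversely, if delta = P1 A P2 with positive P1, P2, then P1 A P2 has n - 1 letters and
   induces the same n-cycle as delta.  Counting the connected components of the graph whose
   edges are the letters shows that every letter joins two points of one block, so the
   splitting argument runs backwards and no letter obstructs a later one. *)

lemmas braid_eq_trans [trans] = braid_eq.trans

lemma braid_eq_append: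
  "braid_eq n u u' \<Longrightarrow> braid_eq n v v' \<Longrightarrow> braid_eq n (u @ v) (u' @ v')"
  using braid_eq.cong[of n u u' "[]" v] braid_eq.cong[of n v v' u' "[]"] braid_eq.trans by auto

lemma braid_eq_cancel_letter:
  "1 \<le> i \<Longrightarrow> i < n \<Longrightarrow> braid_eq n (x @ [(i, b), (i, \<not> b)] @ y) (x @ y)"
  using braid_eq.cong[OF braid_eq.cancel[of i n b], of x y] by simp

lemma braid_eq_braid_Suc:
  "1 \<le> i \<Longrightarrow> Suc i < n \<Longrightarrow>
    braid_eq n [(i, True), (Suc i, True), (i, True)] [(Suc i, True), (i, True), (Suc i, True)]"
  using braid_eq.braid[of i n] by simp

definition wf_word :: "nat \<Rightarrow> art_word \<Rightarrow> bool" where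
  "wf_word n w \<longleftrightarrow> fst ` set w \<subseteq> {1..<n}"

definition inv_word :: "art_word \<Rightarrow> art_word" where
  "inv_word w = rev (map (\<lambda>(i, b). (i, \<not> b)) w)"

lemma inv_word_simps [simp]:
  "inv_word [] = []"
  "inv_word ((i, b) # w) = inv_word w @ [(i, \<not> b)]"
  "inv_word (u @ v) = inv_word v @ inv_word u"
  by (simp_all add: inv_word_def)

lemma inv_word_inv_word [simp]: "inv_word (inv_word w) = w"
  by (simp add: inv_word_def rev_map comp_def case_prod_beta)

lemma wf_word_inv_word [simp]: "wf_word n (inv_word w) \<longleftrightarrow> wf_word n w"
  unfolding wf_word_def inv_word_def by (simp add: image_image case_prod_beta)

lemma braid_eq_cancel_inv_word: "wf_word n w \<Longrightarrow> braid_eq n (w @ inv_word w) []"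
proof (induction w)
  case Nil
  then show ?case by (simp add: braid_eq.refl)
next
  case (Cons l w)
  obtain i b where l: "l = (i, b)" by fastforce
  have "braid_eq n ([l] @ (w @ inv_word w) @ [(i, \<not> b)]) ([l] @ [] @ [(i, \<not> b)])"
    using Cons by (intro braid_eq.cong) (simp add: wf_word_def)
  also have "braid_eq n \<dots> []"
    using braid_eq.cancel[of i n b] Cons.prems by (simp add: l wf_word_def)
  finally show ?case by (simp add: l)
qed

lemma braid_eq_inv_word_cancel: "wf_word n w \<Longrightarrow> braid_eq n (inv_word w @ w) []"
  using braid_eq_cancel_inv_word[of n "inv_word w"] by simp

lemma braid_eq_rearrange:
  assumes "wf_word n x" "wf_word n y" "braid_eq n (x @ u) (v @ y)"
  shows "braid_eq n (u @ inv_word y) (inv_word x @ v)"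
proof -
  have "braid_eq n (u @ inv_word y) ((inv_word x @ x) @ u @ inv_word y)"
    using braid_eq.cong[OF braid_eq.sym[OF braid_eq_inv_word_cancel[OF assms(1)]], of "[]" "u @ inv_word y"]
    by simp
  also have "braid_eq n \<dots> (inv_word x @ (v @ y) @ inv_word y)"
    using braid_eq.cong[OF assms(3), of "inv_word x" "inv_word y"] by simp
  also have "braid_eq n \<dots> (inv_word x @ v @ [])"
    using braid_eq.cong[OF braid_eq_cancel_inv_word[OF assms(2)], of "inv_word x @ v" "[]"] by simp
  finally show ?thesis by simp
qed

lemma braid_eq_conj_append:
  assumes "wf_word n x"
  shows "braid_eq n (x @ u @ v @ inv_word x) ((x @ u @ inv_word x) @ (x @ v @ inv_word x))"
  using braid_eq.cong[OF braid_eq.sym[OF braid_eq_inv_word_cancel[OF assms]], of "x @ u" "v @ inv_word x"]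
  by simp

definition commute :: "nat \<Rightarrow> art_word \<Rightarrow> art_word \<Rightarrow> bool" where
  "commute n u v \<longleftrightarrow> braid_eq n (u @ v) (v @ u)"

lemma commute_Nil [simp]: "commute n [] v" "commute n u []"
  by (simp_all add: commute_def braid_eq.refl)

lemma commute_sym: "commute n u v \<Longrightarrow> commute n v u"
  unfolding commute_def by (rule braid_eq.sym)

lemma braid_eq_swap: "commute n u v \<Longrightarrow> braid_eq n (x @ u @ v @ y) (x @ v @ u @ y)"
  using braid_eq.cong[of n "u @ v" "v @ u" x y] unfolding commute_def by simp

lemma commute_append:
  assumes "commute n u w" "commute n v w"
  shows "commute n (u @ v) w"
proof -
  have "braid_eq n (u @ (v @ w) @ []) (u @ (w @ v) @ [])"
    using assms(2) unfolding commute_def by (rule braid_eq.cong)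
  also have "braid_eq n \<dots> ([] @ (w @ u) @ v)"
    using braid_eq.cong[of n "u @ w" "w @ u" "[]" v] assms(1) unfolding commute_def by simp
  finally show ?thesis unfolding commute_def by simp
qed

lemma commute_append_right: "commute n w u \<Longrightarrow> commute n w v \<Longrightarrow> commute n w (u @ v)"
  using commute_append commute_sym by blast

lemma commute_by_letters: "(\<And>x. x \<in> set u \<Longrightarrow> commute n [x] v) \<Longrightarrow> commute n u v"
proof (induction u)
  case Nil
  then show ?case by simp
next
  case (Cons x u)
  then show ?case using commute_append[of n "[x]" v u] by simp
qed

lemma commute_concat:
  "(\<And>u v. u \<in> set us \<Longrightarrow> v \<in> set vs \<Longrightarrow> commute n u v) \<Longrightarrow> commute n (concat us) (concat vs)"
proof (induction us)
  case Nil
  then show ?case by simp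
next
  case (Cons u us)
  have "commute n u (concat vs)"
    using Cons.prems by (induction vs) (auto intro: commute_append_right)
  then show ?case
    using Cons by (simp add: commute_append)
qed

lemma commute_inv_word: "wf_word n u \<Longrightarrow> commute n u v \<Longrightarrow> commute n (inv_word u) v"
  unfolding commute_def by (rule braid_eq.sym, rule braid_eq_rearrange)

lemma commute_distant_letters:
  assumes "1 \<le> i" "i < n" "1 \<le> j" "j < n" "i + 2 \<le> j \<or> j + 2 \<le> i"
  shows "commute n [(i, b)] [(j, c)]"
proof -
  have pos: "commute n [(i, True)] [(j, True)]" if "1 \<le> i" "i < n" "1 \<le> j" "j < n" "i + 2 \<le> j" for i j
    using braid_eq.comm[OF that] by (simp add: commute_def)
  have "commute n [(i, True)] [(j, True)]"
    using assms pos[of i j] pos[of j i] commute_sym by auto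
  then have "commute n [(i, b)] [(j, True)]"
    using commute_inv_word[of n "[(i, True)]"] assms by (cases b) (auto simp: wf_word_def)
  then have "commute n [(j, c)] [(i, b)]"
    using commute_inv_word[of n "[(j, True)]"] commute_sym assms by (cases c) (auto simp: wf_word_def)
  then show ?thesis by (rule commute_sym)
qed

lemma braid_eq_commute_letters:
  "1 \<le> i \<Longrightarrow> i < n \<Longrightarrow> 1 \<le> j \<Longrightarrow> j < n \<Longrightarrow> i + 2 \<le> j \<or> j + 2 \<le> i \<Longrightarrow>
    braid_eq n (x @ [(i, b), (j, c)] @ y) (x @ [(j, c), (i, b)] @ y)"
  using braid_eq.cong[OF commute_distant_letters[unfolded commute_def]] by simp

section \<open>Relations between band generators\<close>

lemma band_word_Suc:
  "s < t \<Longrightarrow> band_word (Suc t) s = [(t, True)] @ band_word t s @ [(t, False)]"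
  unfolding band_word_def by simp

lemma band_word_Suc_self: "band_word (Suc s) s = [(s, True)]"
  unfolding band_word_def by simp

lemma band_word_letters: "(j, b) \<in> set (band_word t s) \<Longrightarrow> s < t \<Longrightarrow> s \<le> j \<and> j < t"
  unfolding band_word_def by auto

lemma eval_band_simps [simp]:
  "eval_band [] = []"
  "eval_band ((t, s) # U) = band_word t s @ eval_band U"
  "eval_band (U @ V) = eval_band U @ eval_band V"
  by (simp_all add: eval_band_def)

lemma commute_letter_band_word_outside:
  assumes "1 \<le> s" "s < t" "t \<le> n" "1 \<le> j" "j < n" "j + 2 \<le> s \<or> t < j"
  shows "commute n [(j, b)] (band_word t s)"
proof (rule commute_sym, rule commute_by_letters)
  fix x assume "x \<in> set (band_word t s)"
  moreover obtain i c where "x = (i, c)" by fastforce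
  ultimately show "commute n [x] [(j, b)]"
    using band_word_letters[of i c t s] assms by (auto intro: commute_distant_letters)
qed

lemma commute_letter_band_word_inside:
  assumes "1 \<le> s" "s < j" "j + 2 \<le> t" "t \<le> n"
  shows "commute n [(j, True)] (band_word t s)"
  using assms(3,4)
proof (induction t rule: dec_induct)
  case base
  let ?W = "band_word j s"
  have bw: "band_word (j + 2) s = [(Suc j, True), (j, True)] @ ?W @ [(j, False), (Suc j, False)]"
    using band_word_Suc[of s "Suc j"] band_word_Suc[of s j] assms by simp
  have braid_inv: "braid_eq n [(Suc j, True), (j, False), (Suc j, False)] [(j, False), (Suc j, False), (j, True)]"
    using braid_eq_rearrange[of n "[(Suc j, True), (j, True)]" "[(Suc j, True), (j, True)]"
        "[(Suc j, True)]" "[(j, True)]"] braid_eq.sym[OF braid_eq_braid_Suc[of j n]] assms base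
    by (simp add: wf_word_def)
  have "braid_eq n ([(j, True), (Suc j, True), (j, True)] @ ?W @ [(j, False), (Suc j, False)])
      ([(Suc j, True), (j, True), (Suc j, True)] @ ?W @ [(j, False), (Suc j, False)])"
    using braid_eq.cong[OF braid_eq_braid_Suc[of j n], of "[]"] assms base by simp
  also have "braid_eq n \<dots> ([(Suc j, True), (j, True)] @ (?W @ [(Suc j, True)]) @ [(j, False), (Suc j, False)])"
    using braid_eq.cong[OF commute_letter_band_word_outside[of s j n "Suc j" True, unfolded commute_def],
        of "[(Suc j, True), (j, True)]"] assms base by simp
  also have "braid_eq n \<dots> (([(Suc j, True), (j, True)] @ ?W) @ [(j, False), (Suc j, False), (j, True)])"
    using braid_eq.cong[OF braid_inv, of "[(Suc j, True), (j, True)] @ ?W" "[]"] by simp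
  finally show ?case using bw by (simp add: commute_def)
next
  case (step m)
  have "commute n [(j, True)] [(m, b)]" for b
    using step assms by (intro commute_distant_letters) auto
  then have "commute n [(j, True)] ([(m, True)] @ band_word m s @ [(m, False)])"
    using step by (intro commute_append_right) simp_all
  then show ?case
    using band_word_Suc[of s m] step.hyps assms by simp
qed

lemma commute_letter_band_word:
  assumes "1 \<le> s" "s < t" "t \<le> n" "1 \<le> j" "j < n" "j + 2 \<le> s \<or> t < j \<or> (s < j \<and> j + 2 \<le> t)"
  shows "commute n [(j, b)] (band_word t s)"
proof (cases "j + 2 \<le> s \<or> t < j")
  case True
  then show ?thesis using assms commute_letter_band_word_outside by blast
next
  case False
  then have "commute n [(j, True)] (band_word t s)"
    using assms commute_letter_band_word_inside by simp
  then show ?thesis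
    using commute_inv_word[of n "[(j, True)]"] assms by (cases b) (auto simp: wf_word_def)
qed

lemma commute_band_words:
  assumes "1 \<le> s" "s < t" "t \<le> n" "1 \<le> q" "q < r" "r \<le> n"
    and "t < q \<or> r < s \<or> (s < q \<and> r < t) \<or> (q < s \<and> t < r)"
  shows "commute n (band_word t s) (band_word r q)"
proof (cases "q < s \<and> t < r")
  case True
  show ?thesis
  proof (rule commute_by_letters)
    fix x assume "x \<in> set (band_word t s)"
    moreover obtain j b where "x = (j, b)" by fastforce
    ultimately show "commute n [x] (band_word r q)"
      using band_word_letters[of j b t s] assms True by (auto intro: commute_letter_band_word)
  qed
next
  case False
  have "commute n (band_word r q) (band_word t s)"
  proof (rule commute_by_letters)
    fix x assume "x \<in> set (band_word r q)"
    moreover obtain j b where "x = (j, b)" by fastforce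
    ultimately show "commute n [x] (band_word t s)"
      using band_word_letters[of j b r q] assms False by (auto intro: commute_letter_band_word)
  qed
  then show ?thesis by (rule commute_sym)
qed

lemma commute_eval_band:
  "(\<And>t s r q. (t, s) \<in> set U \<Longrightarrow> (r, q) \<in> set V \<Longrightarrow> commute n (band_word t s) (band_word r q)) \<Longrightarrow>
    commute n (eval_band U) (eval_band V)"
  unfolding eval_band_def by (rule commute_concat) auto

lemma band_word_conj_Suc:
  assumes "1 \<le> s" "s + 2 \<le> t" "t \<le> n"
  shows "braid_eq n (band_word t s) ([(s, False)] @ band_word t (Suc s) @ [(s, True)])"
  using assms(2,3)
proof (induction t rule: dec_induct)
  case base
  have "braid_eq n ([(Suc s, True), (s, True)] @ [(Suc s, False)]) ([(s, False)] @ [(Suc s, True), (s, True)])"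
    using braid_eq_rearrange[of n "[(s, True)]" "[(Suc s, True)]" "[(Suc s, True), (s, True)]"]
      braid_eq_braid_Suc[of s n] assms base by (simp add: wf_word_def)
  then show ?case
    using band_word_Suc[of s "Suc s"] band_word_Suc_self[of s] band_word_Suc_self[of "Suc s"] by simp
next
  case (step m)
  let ?B = "band_word m (Suc s)"
  have IH: "braid_eq n (band_word m s) ([(s, False)] @ ?B @ [(s, True)])"
    using step by simp
  have "braid_eq n (band_word (Suc m) s) ([(m, True)] @ ([(s, False)] @ ?B @ [(s, True)]) @ [(m, False)])"
    using braid_eq.cong[OF IH, of "[(m, True)]" "[(m, False)]"] band_word_Suc[of s m] step by simp
  also have "braid_eq n \<dots> ([(s, False), (m, True)] @ ?B @ [(s, True), (m, False)])"
    using braid_eq_commute_letters[of m n s "[]" True False] assms step by simp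
  also have "braid_eq n \<dots> ([(s, False), (m, True)] @ ?B @ [(m, False), (s, True)])"
    using braid_eq_commute_letters[of s n m "[(s, False), (m, True)] @ ?B" True False "[]"] assms step
    by simp
  finally show ?case
    using band_word_Suc[of "Suc s" m] step by simp
qed

lemma band_word_braid_letter:
  assumes "1 \<le> r" "r + 2 \<le> t" "t \<le> n"
  shows "braid_eq n (band_word t (Suc r) @ [(r, True)] @ band_word t (Suc r))
    ([(r, True)] @ band_word t (Suc r) @ [(r, True)])"
  using assms(2,3)
proof (induction t rule: dec_induct)
  case base
  then show ?case
    using band_word_Suc_self[of "Suc r"] braid_eq.sym[OF braid_eq_braid_Suc[of r n]] assms by simp
next
  case (step m)
  let ?A = "band_word m (Suc r)"
  have IH: "braid_eq n (?A @ [(r, True)] @ ?A) ([(r, True)] @ ?A @ [(r, True)])"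
    using step by simp
  have A: "band_word (Suc m) (Suc r) = [(m, True)] @ ?A @ [(m, False)]"
    using band_word_Suc step by simp
  have "braid_eq n (([(m, True)] @ ?A) @ [(m, False), (r, True)] @ ([(m, True)] @ ?A @ [(m, False)]))
      (([(m, True)] @ ?A) @ [(r, True), (m, False)] @ ([(m, True)] @ ?A @ [(m, False)]))"
    using braid_eq_commute_letters[of m n r "[(m, True)] @ ?A" False True
        "[(m, True)] @ ?A @ [(m, False)]"] assms step by simp
  also have "braid_eq n \<dots> ([(m, True)] @ (?A @ [(r, True)] @ ?A) @ [(m, False)])"
    using braid_eq_cancel_letter[of m n "[(m, True)] @ ?A @ [(r, True)]" False "?A @ [(m, False)]"] step
    by simp
  also have "braid_eq n \<dots> ([(m, True)] @ ([(r, True)] @ ?A @ [(r, True)]) @ [(m, False)])"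
    using braid_eq.cong[OF IH, of "[(m, True)]" "[(m, False)]"] by simp
  also have "braid_eq n \<dots> ([(r, True), (m, True)] @ ?A @ [(r, True), (m, False)])"
    using braid_eq_commute_letters[of m n r "[]" True True] assms step by simp
  also have "braid_eq n \<dots> ([(r, True), (m, True)] @ ?A @ [(m, False), (r, True)])"
    using braid_eq_commute_letters[of r n m "[(r, True), (m, True)] @ ?A" True False "[]"] assms step
    by simp
  finally show ?case using A by simp
qed

lemma band_words_ts_sr_tr_ts:
  assumes "1 \<le> r" "r < s" "s < t" "t \<le> n"
  shows "braid_eq n (band_word t s @ band_word s r) (band_word t r @ band_word t s)"
  using Suc_leI[OF assms(3)]
proof (induction t rule: dec_induct)
  case base
  show ?case
    using braid_eq.sym[OF braid_eq_cancel_letter[of s n "[(s, True)] @ band_word s r" False "[]"]]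
      band_word_Suc_self[of s] band_word_Suc[of r s] assms by simp
next
  case (step m)
  have "commute n [(m, False)] (band_word s r)"
    using step assms by (intro commute_letter_band_word) auto
  then have "braid_eq n (band_word (Suc m) s @ band_word s r)
      ([(m, True)] @ band_word m s @ band_word s r @ [(m, False)])"
    using braid_eq.cong[of n "[(m, False)] @ band_word s r" _ "[(m, True)] @ band_word m s" "[]"]
      band_word_Suc[of s m] step by (simp add: commute_def)
  also have "braid_eq n \<dots> ([(m, True)] @ band_word m r @ band_word m s @ [(m, False)])"
    using braid_eq.cong[OF step.IH, of "[(m, True)]" "[(m, False)]"] by simp
  also have "braid_eq n \<dots> (band_word (Suc m) r @ band_word (Suc m) s)"
    using braid_eq_conj_append[of n "[(m, True)]" "band_word m r" "band_word m s"]
      band_word_Suc[of r m] band_word_Suc[of s m] step assms by (simp add: wf_word_def)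
  finally show ?case .
qed

lemma band_words_tr_ts_sr_tr_Suc:
  assumes "1 \<le> r" "Suc r < t" "t \<le> n"
  shows "braid_eq n (band_word t r @ band_word t (Suc r)) (band_word (Suc r) r @ band_word t r)"
proof -
  let ?A = "band_word t (Suc r)" and ?\<sigma> = "[(r, True)]"
  have conj: "braid_eq n (band_word t r) ([(r, False)] @ ?A @ ?\<sigma>)"
    using band_word_conj_Suc assms by simp
  have "braid_eq n (band_word t r @ ?A) ([(r, False)] @ (?A @ ?\<sigma> @ ?A))"
    using braid_eq_append[OF conj braid_eq.refl] by simp
  also have "braid_eq n \<dots> ([(r, False)] @ (?\<sigma> @ ?A @ ?\<sigma>))"
    using braid_eq.cong[OF band_word_braid_letter[of r t n], of "[(r, False)]" "[]"] assms by simp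
  also have "braid_eq n \<dots> (?A @ ?\<sigma>)"
    using braid_eq_cancel_letter[of r n "[]" False "?A @ ?\<sigma>"] assms by simp
  also have "braid_eq n \<dots> (?\<sigma> @ [(r, False)] @ ?A @ ?\<sigma>)"
    using braid_eq.sym[OF braid_eq_cancel_letter[of r n "[]" True "?A @ ?\<sigma>"]] assms by simp
  also have "braid_eq n \<dots> (band_word (Suc r) r @ band_word t r)"
    using braid_eq_append[OF braid_eq.refl braid_eq.sym[OF conj], of ?\<sigma>] band_word_Suc_self by simp
  finally show ?thesis .
qed

lemma band_words_tr_ts_sr_tr:
  assumes "1 \<le> r" "r < s" "s < t" "t \<le> n"
  shows "braid_eq n (band_word t r @ band_word t s) (band_word s r @ band_word t r)"
proof -
  obtain s0 where s: "s = Suc s0" using assms(2) by (cases s) auto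
  have "r \<le> s0" using assms(2) s by simp
  then show ?thesis
    unfolding s
  proof (induction r rule: inc_induct)
    case base
    show ?case
      using band_words_tr_ts_sr_tr_Suc[of s0 t n] assms s by simp
  next
    case (step r)
    let ?\<sigma> = "[(r, False)]"
    let ?X = "band_word t (Suc r)" and ?Y = "band_word (Suc s0) (Suc r)" and ?A = "band_word t (Suc s0)"
    have c1: "braid_eq n (band_word t r) (?\<sigma> @ ?X @ inv_word ?\<sigma>)"
      using band_word_conj_Suc assms step s by simp
    have c2: "braid_eq n (band_word (Suc s0) r) (?\<sigma> @ ?Y @ inv_word ?\<sigma>)"
      using band_word_conj_Suc assms step s by simp
    have "commute n [(r, True)] ?A"
      using assms step s by (intro commute_letter_band_word) auto
    have "braid_eq n (band_word t r @ ?A) ((?\<sigma> @ ?X @ inv_word ?\<sigma>) @ ?A)"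
      using braid_eq_append[OF c1 braid_eq.refl] .
    also have "braid_eq n \<dots> (?\<sigma> @ (?X @ ?A) @ inv_word ?\<sigma>)"
      using braid_eq_swap[OF \<open>commute n [(r, True)] ?A\<close>, of "?\<sigma> @ ?X" "[]"] by simp
    also have "braid_eq n \<dots> (?\<sigma> @ (?Y @ ?X) @ inv_word ?\<sigma>)"
      using braid_eq.cong[OF step.IH] by blast
    also have "braid_eq n \<dots> ((?\<sigma> @ ?Y @ inv_word ?\<sigma>) @ (?\<sigma> @ ?X @ inv_word ?\<sigma>))"
      using braid_eq_conj_append[of n ?\<sigma> ?Y ?X] assms step s by (simp add: wf_word_def)
    also have "braid_eq n \<dots> (band_word (Suc s0) r @ band_word t r)"
      using braid_eq_append[OF braid_eq.sym[OF c2] braid_eq.sym[OF c1]] .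
    finally show ?case .
  qed
qed

lemma band_words_ts_sr_sr_tr:
  "1 \<le> r \<Longrightarrow> r < s \<Longrightarrow> s < t \<Longrightarrow> t \<le> n \<Longrightarrow>
    braid_eq n (band_word t s @ band_word s r) (band_word s r @ band_word t r)"
  using braid_eq.trans[OF band_words_ts_sr_tr_ts band_words_tr_ts_sr_tr] by blast

section \<open>Noncrossing partitions\<close>

definition crossing :: "'a::linorder set \<Rightarrow> 'a set \<Rightarrow> bool" where
  "crossing B C \<longleftrightarrow> (\<exists>a\<in>B. \<exists>a'\<in>B. \<exists>c\<in>C. \<exists>c'\<in>C. a < c \<and> c < a' \<and> a' < c')"

lemma noncrossing_same_side:
  assumes "\<not> crossing B C" "\<not> crossing C B" "B \<inter> C = {}"
    and "s \<in> B" "t \<in> B" "s < t" "p \<in> C" "q \<in> C"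
  shows "p \<in> {s<..t} \<longleftrightarrow> q \<in> {s<..t}"
proof -
  have "q \<in> {s<..t}" if "p \<in> {s<..t}" "p \<in> C" "q \<in> C" for p q
  proof (rule ccontr)
    assume q: "q \<notin> {s<..t}"
    have "s < p" "p < t" "q \<noteq> s" "q \<noteq> t"
      using that assms(3-5) by (auto simp: order.order_iff_strict)
    then consider "q < s" | "t < q" using q by fastforce
    then show False
    proof cases
      case 1
      then show False using assms(2) \<open>s < p\<close> \<open>p < t\<close> that assms(4,5) unfolding crossing_def by blast
    next
      case 2
      then show False using assms(1) \<open>s < p\<close> \<open>p < t\<close> that assms(4,5) unfolding crossing_def by blast
    qed
  qed
  then show ?thesis using assms(7,8) by blast
qed

lemma crossing_mono: "crossing B C \<Longrightarrow> B \<subseteq> B' \<Longrightarrow> C \<subseteq> C' \<Longrightarrow> crossing B' C'"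
  unfolding crossing_def by blast

lemma interval_not_crossing:
  assumes "B \<subseteq> {s<..t}" "C \<inter> {s<..t} = {}"
  shows "\<not> crossing B C" "\<not> crossing C B"
proof -
  show "\<not> crossing B C"
  proof
    assume "crossing B C"
    then obtain a a' c where "a \<in> B" "a' \<in> B" "c \<in> C" "a < c" "c < a'"
      unfolding crossing_def by blast
    then show False using assms by force
  qed
  show "\<not> crossing C B"
  proof
    assume "crossing C B"
    then obtain c c' a' where "c \<in> B" "c' \<in> B" "a' \<in> C" "c < a'" "a' < c'"
      unfolding crossing_def by blast
    then show False using assms by force
  qed
qed

lemma commute_band_words_same_side:
  assumes "1 \<le> s" "s < t" "t \<le> n" "1 \<le> q" "q < p" "p \<le> n" "{p, q} \<inter> {s, t} = {}"
    and "p \<in> {s<..t} \<longleftrightarrow> q \<in> {s<..t}"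
  shows "commute n (band_word p q) (band_word t s)"
proof -
  have "p \<noteq> s" "p \<noteq> t" "q \<noteq> s" "q \<noteq> t"
    using assms(7) by auto
  then have "t < q \<or> p < s \<or> (s < q \<and> p < t) \<or> (q < s \<and> t < p)"
    using assms(5,8) by (cases "p \<in> {s<..t}") auto
  then show ?thesis
    using assms commute_sym[OF commute_band_words] by simp
qed

definition noncrossing_partition :: "nat \<Rightarrow> nat list list \<Rightarrow> bool" where
  "noncrossing_partition n P \<longleftrightarrow>
     (\<forall>L\<in>set P. L \<noteq> [] \<and> sorted_wrt (>) L) \<and> distinct (concat P) \<and> set (concat P) = {1..n} \<and>
     (\<forall>B\<in>set P. \<forall>C\<in>set P. B \<noteq> C \<longrightarrow> \<not> crossing (set B) (set C))"

lemma noncrossing_partition_block: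
  "noncrossing_partition n P \<Longrightarrow> L \<in> set P \<Longrightarrow> L \<noteq> [] \<and> sorted_wrt (>) L \<and> set L \<subseteq> {1..n}"
  unfolding noncrossing_partition_def by auto

lemma noncrossing_partition_other_block:
  assumes "noncrossing_partition n (P1 @ L # P2)" "C \<in> set P1 \<union> set P2"
  shows "C \<noteq> L" "set C \<inter> set L = {}" "\<not> crossing (set C) (set L)" "\<not> crossing (set L) (set C)"
proof -
  have dist: "distinct (concat P1 @ L @ concat P2)" and "L \<noteq> []"
    using assms(1) unfolding noncrossing_partition_def by auto
  then have "hd L \<in> set L" by simp
  with dist assms(2) show "C \<noteq> L"
    by (auto simp: distinct_append)
  moreover show "set C \<inter> set L = {}"
    using dist assms(2) by (auto simp: distinct_append)
  ultimately show "\<not> crossing (set C) (set L)" "\<not> crossing (set L) (set C)"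
    using assms unfolding noncrossing_partition_def by auto
qed

lemma noncrossing_partition_single_block: "1 \<le> n \<Longrightarrow> noncrossing_partition n [rev [1..<Suc n]]"
  unfolding noncrossing_partition_def by (auto simp: sorted_wrt_rev)

definition block_split :: "nat \<Rightarrow> nat \<Rightarrow> nat list \<Rightarrow> nat list list" where
  "block_split t s L = [filter (\<lambda>x. x \<in> {s<..t}) L, filter (\<lambda>x. x \<notin> {s<..t}) L]"

lemma split_partition_not_crossing:
  assumes "noncrossing_partition n (P1 @ L # P2)"
    and "B \<in> set (P1 @ block_split t s L @ P2)" "C \<in> set (P1 @ block_split t s L @ P2)" "B \<noteq> C"
  shows "\<not> crossing (set B) (set C)"
proof -
  let ?L1 = "[x\<leftarrow>L. x \<in> {s<..t}]" and ?L2 = "[x\<leftarrow>L. x \<notin> {s<..t}]"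
  have new: "\<not> crossing (set B) (set C)" if "B \<in> {?L1, ?L2}" "C \<in> {?L1, ?L2}" "B \<noteq> C" for B C
  proof -
    have "set ?L1 \<subseteq> {s<..t}" "set ?L2 \<inter> {s<..t} = {}" by auto
    then have "\<not> crossing (set ?L1) (set ?L2)" "\<not> crossing (set ?L2) (set ?L1)"
      by (rule interval_not_crossing)+
    then show ?thesis using that by auto
  qed
  have old: "\<not> crossing (set B) (set L)" "\<not> crossing (set L) (set B)" if "B \<in> set P1 \<union> set P2" for B
    using noncrossing_partition_other_block[OF assms(1) that] by auto
  have old_old: "\<not> crossing (set B) (set C)"
    if "B \<in> set P1 \<union> set P2" "C \<in> set P1 \<union> set P2" "B \<noteq> C" for B C
    using assms(1) that unfolding noncrossing_partition_def by auto
  have sub: "set D \<subseteq> set L" if "D \<in> {?L1, ?L2}" for D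
    using that by auto
  have "B \<in> set P1 \<union> set P2 \<or> B \<in> {?L1, ?L2}" "C \<in> set P1 \<union> set P2 \<or> C \<in> {?L1, ?L2}"
    using assms(2,3) unfolding block_split_def by auto
  then show ?thesis
  proof (elim disjE)
    assume "B \<in> set P1 \<union> set P2" "C \<in> set P1 \<union> set P2"
    then show ?thesis using old_old assms(4) by blast
  next
    assume "B \<in> set P1 \<union> set P2" "C \<in> {?L1, ?L2}"
    then show ?thesis using old(1)[of B] sub[of C] crossing_mono[of "set B" "set C" "set B" "set L"] by blast
  next
    assume "B \<in> {?L1, ?L2}" "C \<in> set P1 \<union> set P2"
    then show ?thesis using old(2)[of C] sub[of B] crossing_mono[of "set B" "set C" "set L" "set C"] by blast
  next
    assume "B \<in> {?L1, ?L2}" "C \<in> {?L1, ?L2}"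
    then show ?thesis using new assms(4) by blast
  qed
qed

lemma noncrossing_partition_split:
  assumes "noncrossing_partition n (P1 @ L # P2)" "t \<in> set L" "s \<in> set L" "s < t"
  shows "noncrossing_partition n (P1 @ block_split t s L @ P2)"
proof -
  have L: "sorted_wrt (>) L" and dist: "distinct (concat P1 @ L @ concat P2)"
    and cover: "set (concat (P1 @ L # P2)) = {1..n}"
    using assms(1) unfolding noncrossing_partition_def by auto
  have "\<forall>B\<in>set (P1 @ block_split t s L @ P2). B \<noteq> [] \<and> sorted_wrt (>) B"
    using assms L unfolding noncrossing_partition_def block_split_def
    by (auto simp: sorted_wrt_filter filter_empty_conv)
  moreover have "distinct (concat (P1 @ block_split t s L @ P2))"
    using dist unfolding block_split_def by (auto simp: distinct_append)
  moreover have "set (concat (P1 @ block_split t s L @ P2)) = {1..n}"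
    using cover unfolding block_split_def by auto
  ultimately show ?thesis
    using split_partition_not_crossing[OF assms(1)] unfolding noncrossing_partition_def by blast
qed

definition within_block :: "nat list list \<Rightarrow> nat \<times> nat \<Rightarrow> bool" where
  "within_block P a \<longleftrightarrow> (\<exists>L\<in>set P. fst a \<in> set L \<and> snd a \<in> set L)"

lemma within_block_split_imp:
  "within_block (P1 @ block_split t s L @ P2) a \<Longrightarrow> within_block (P1 @ L # P2) a"
  unfolding within_block_def block_split_def by auto

lemma obstructing_iff:
  "obstructing n (t, s) (p, q) \<longleftrightarrow>
    (t, s) \<in> band_gens n \<and> (p, q) \<in> band_gens n \<and> (p \<in> {s<..t}) \<noteq> (q \<in> {s<..t})"
  unfolding obstructing_def band_gens_def
  by (simp add: ex_disj_distrib conj_disj_distribL) arith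

lemma within_block_split_iff:
  assumes "noncrossing_partition n (P1 @ L # P2)" "t \<in> set L" "s \<in> set L" "s < t"
    and "within_block (P1 @ L # P2) (p, q)" "(p, q) \<in> band_gens n"
  shows "within_block (P1 @ block_split t s L @ P2) (p, q) \<longleftrightarrow> \<not> obstructing n (t, s) (p, q)"
proof -
  have "set L \<subseteq> {1..n}"
    using noncrossing_partition_block[OF assms(1)] by simp
  then have "(t, s) \<in> band_gens n"
    using assms(2-4) unfolding band_gens_def by auto
  then have obstructing: "obstructing n (t, s) (p, q) \<longleftrightarrow> (p \<in> {s<..t}) \<noteq> (q \<in> {s<..t})"
    using assms(6) by (simp add: obstructing_iff)
  obtain C where C: "C \<in> set (P1 @ L # P2)" "p \<in> set C" "q \<in> set C"
    using assms(5) unfolding within_block_def by auto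
  show ?thesis
  proof (cases "C \<in> set P1 \<union> set P2")
    case True
    note other = noncrossing_partition_other_block[OF assms(1) True]
    have "p \<in> {s<..t} \<longleftrightarrow> q \<in> {s<..t}"
      using noncrossing_same_side[OF other(4,3)] other(2) assms(2-4) C by blast
    then show ?thesis
      using True C obstructing unfolding within_block_def by auto
  next
    case False
    then have "C = L" using C(1) by auto
    have "B \<notin> set P1 \<union> set P2" if "p \<in> set B" for B
      using noncrossing_partition_other_block(2)[OF assms(1), of B] that C \<open>C = L\<close> by blast
    then have "within_block (P1 @ block_split t s L @ P2) (p, q) \<longleftrightarrow>
        within_block [[x\<leftarrow>L. x \<in> {s<..t}], [x\<leftarrow>L. x \<notin> {s<..t}]] (p, q)"
      unfolding within_block_def block_split_def by auto
    then show ?thesis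
      using C \<open>C = L\<close> obstructing unfolding within_block_def by auto
  qed
qed

section \<open>The positive word of a noncrossing partition\<close>

(* Blocks are decreasing lists; the word of a block b1 > b2 > ... > bk is
   a_(b1 b2) a_(b2 b3) ... a_(b(k-1) bk). *)
definition block_word :: "'a list \<Rightarrow> ('a \<times> 'a) list" where
  "block_word L = zip L (tl L)"

definition partition_word :: "'a list list \<Rightarrow> ('a \<times> 'a) list" where
  "partition_word P = concat (map block_word P)"

lemma block_word_simps [simp]:
  "block_word [] = []"
  "block_word [x] = []"
  "block_word (x # y # L) = (x, y) # block_word (y # L)"
  by (simp_all add: block_word_def)

lemma block_word_append: "block_word (xs @ y # ys) = block_word (xs @ [y]) @ block_word (y # ys)"
  by (induction xs rule: induct_list012) auto

lemma block_word_snoc: "xs \<noteq> [] \<Longrightarrow> block_word (xs @ [y]) = block_word xs @ [(last xs, y)]"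
  by (induction xs rule: induct_list012) auto

lemma block_word_letters:
  "sorted_wrt (>) L \<Longrightarrow> (p, q) \<in> set (block_word L) \<Longrightarrow> p \<in> set L \<and> q \<in> set L \<and> q < p"
  by (induction L rule: induct_list012) auto

lemma partition_word_simps [simp]:
  "partition_word [] = []"
  "partition_word (L # P) = block_word L @ partition_word P"
  "partition_word (P @ Q) = partition_word P @ partition_word Q"
  by (simp_all add: partition_word_def)

lemma partition_word_letters:
  "(p, q) \<in> set (partition_word P) \<Longrightarrow> \<exists>L\<in>set P. (p, q) \<in> set (block_word L)"
  by (auto simp: partition_word_def)

lemma partition_word_positive: "noncrossing_partition n P \<Longrightarrow> positive_word n (partition_word P)"
  unfolding positive_word_def band_gens_def
proof
  fix a assume P: "noncrossing_partition n P" and a: "a \<in> set (partition_word P)"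
  obtain p q where pq: "a = (p, q)" by fastforce
  obtain L where "L \<in> set P" "(p, q) \<in> set (block_word L)"
    using partition_word_letters[of p q P] a pq by blast
  then show "a \<in> {(t, s). 1 \<le> s \<and> s < t \<and> t \<le> n}"
    using block_word_letters[of L p q] noncrossing_partition_block[OF P] pq by fastforce
qed

lemma delta_eq_partition_word: "delta n = partition_word [rev [1..<Suc n]]"
proof (induction n)
  case (Suc n)
  then show ?case
    by (cases n) (simp_all add: delta_def)
qed (simp add: delta_def)

lemma block_word_arc:
  assumes "sorted_wrt (>) (t # mid @ [s])" "1 \<le> s" "t \<le> n"
  shows "braid_eq n (eval_band (block_word (t # mid @ [s]))) (band_word t s @ eval_band (block_word (t # mid)))"
  using assms
proof (induction mid arbitrary: t)
  case Nil
  then show ?case by (simp add: braid_eq.refl)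
next
  case (Cons m mid)
  have "s < m" "m < t" "sorted_wrt (>) (m # mid @ [s])"
    using Cons.prems by auto
  then have "braid_eq n (band_word t m @ eval_band (block_word (m # mid @ [s])))
      (band_word t m @ band_word m s @ eval_band (block_word (m # mid)))"
    using Cons by (intro braid_eq_append braid_eq.refl Cons.IH) auto
  also have "braid_eq n \<dots> (band_word t s @ band_word t m @ eval_band (block_word (m # mid)))"
    using braid_eq_append[OF band_words_ts_sr_tr_ts braid_eq.refl] \<open>s < m\<close> \<open>m < t\<close> Cons.prems
    by fastforce
  finally show ?case by simp
qed

lemma block_word_snoc_band_word:
  assumes "sorted_wrt (>) (pre @ [t])" "1 \<le> s" "s < t" "set pre \<subseteq> {..n}"
  shows "braid_eq n (eval_band (block_word (pre @ [t])) @ band_word t s)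
    (band_word t s @ eval_band (block_word (pre @ [s])))"
proof (cases "pre = []")
  case True
  then show ?thesis by (simp add: braid_eq.refl)
next
  case False
  let ?p = "last pre" and ?W = "eval_band (block_word pre)"
  have "?p \<in> set pre"
    using False by simp
  then have p: "t < ?p" "?p \<le> n"
    using assms(1,4) by (auto simp: sorted_wrt_append)
  have "commute n ?W (eval_band [(t, s)])"
  proof (rule commute_eval_band)
    fix x y r q assume xy: "(x, y) \<in> set (block_word pre)" and rq: "(r, q) \<in> set [(t, s)]"
    have "sorted_wrt (>) pre" "\<forall>z\<in>set pre. t < z"
      using assms(1) by (simp_all add: sorted_wrt_append)
    then have "t < y" "y < x" "x \<le> n"
      using block_word_letters[of pre x y] xy assms(4) by auto
    then show "commute n (band_word x y) (band_word r q)"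
      using rq assms(2,3) by (intro commute_band_words_same_side) auto
  qed
  have "braid_eq n (?W @ band_word ?p t @ band_word t s) (?W @ band_word t s @ band_word ?p s)"
    using braid_eq_append[OF braid_eq.refl band_words_ts_sr_sr_tr[of s t ?p n]] p assms by simp
  also have "braid_eq n \<dots> (band_word t s @ ?W @ band_word ?p s)"
    using braid_eq_append[OF \<open>commute n ?W (eval_band [(t, s)])\<close>[unfolded commute_def] braid_eq.refl]
    by simp
  finally show ?thesis
    using block_word_snoc[OF False] by simp
qed

lemma sorted_wrt_greater_split:
  fixes L :: "'a::linorder list"
  assumes "sorted_wrt (>) L" "t \<in> set L" "s \<in> set L" "s < t"
  obtains pre mid post where "L = pre @ t # mid @ s # post"
proof -
  obtain pre ys where L: "L = pre @ t # ys"
    using split_list[OF assms(2)] by blast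
  moreover have "\<forall>x\<in>set pre. t < x"
    using assms(1) L by (simp add: sorted_wrt_append)
  then have "s \<in> set ys"
    using assms(3,4) L by auto
  then obtain mid post where "ys = mid @ s # post"
    using split_list by metis
  ultimately show thesis
    using that by blast
qed

lemma block_split_decomp:
  assumes "sorted_wrt (>) (pre @ t # mid @ s # post)"
  shows "block_split t s (pre @ t # mid @ s # post) = [t # mid, pre @ s # post]"
proof -
  have pre: "\<forall>x\<in>set pre. t < x" and mid: "\<forall>x\<in>set mid. s < x \<and> x < t"
    and post: "\<forall>x\<in>set post. x < s" and "s < t"
    using assms by (auto simp: sorted_wrt_append)
  then have "[x\<leftarrow>pre. x \<in> {s<..t}] = []" "[x\<leftarrow>mid. x \<in> {s<..t}] = mid" "[x\<leftarrow>post. x \<in> {s<..t}] = []"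
    "[x\<leftarrow>pre. x \<notin> {s<..t}] = pre" "[x\<leftarrow>mid. x \<notin> {s<..t}] = []" "[x\<leftarrow>post. x \<notin> {s<..t}] = post"
    by (auto simp: filter_empty_conv intro!: filter_True)
  then show ?thesis
    unfolding block_split_def using \<open>s < t\<close> by simp
qed

lemma commute_block_words_nested:
  assumes "sorted_wrt (>) (pre @ [s])" "sorted_wrt (>) (t # mid)"
    and "\<forall>x\<in>set pre. t < x \<and> x \<le> n" "\<forall>x\<in>set mid. s < x" "1 \<le> s" "s < t"
  shows "commute n (eval_band (block_word (pre @ [s]))) (eval_band (block_word (t # mid)))"
proof (rule commute_eval_band)
  fix x y r q
  assume xy: "(x, y) \<in> set (block_word (pre @ [s]))" and rq: "(r, q) \<in> set (block_word (t # mid))"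
  have "x \<in> set (pre @ [s])" "y \<in> set (pre @ [s])" "y < x"
    using block_word_letters[OF assms(1) xy] by auto
  then have x: "t < x" "x \<le> n" and y: "y = s \<or> t < y"
    using assms(3,6) by auto
  have "r \<in> set (t # mid)" "q \<in> set (t # mid)" "q < r"
    using block_word_letters[OF assms(2) rq] by auto
  then have "r \<le> t" "s < q"
    using assms(2,4,6) by auto
  then show "commute n (band_word x y) (band_word r q)"
    using x y \<open>y < x\<close> \<open>q < r\<close> assms(5,6) by (intro commute_band_words_same_side) auto
qed

lemma block_word_split:
  assumes "sorted_wrt (>) L" "set L \<subseteq> {1..n}" "t \<in> set L" "s \<in> set L" "s < t"
  shows "braid_eq n (eval_band (block_word L))
    (band_word t s @ eval_band (partition_word (block_split t s L)))"
proof -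
  have "1 \<le> s" "t \<le> n"
    using assms(2-4) by auto
  obtain pre mid post where L: "L = pre @ t # mid @ s # post"
    using sorted_wrt_greater_split[OF assms(1,3-5)] .
  have pre: "\<forall>x\<in>set pre. t < x \<and> x \<le> n" and mid: "\<forall>x\<in>set mid. s < x"
    using assms(1,2) unfolding L by (auto simp: sorted_wrt_append)
  have sorted_pre_t: "sorted_wrt (>) (pre @ [t])" and sorted_pre_s: "sorted_wrt (>) (pre @ [s])"
    and sorted_arc: "sorted_wrt (>) (t # mid @ [s])"
    using assms(1) unfolding L by (auto simp: sorted_wrt_append)
  let ?W = "\<lambda>xs. eval_band (block_word xs)"
  have "braid_eq n (?W L) (?W (pre @ [t]) @ ?W (t # mid @ [s]) @ ?W (s # post))"
    unfolding L using block_word_append[of pre t "mid @ s # post"] block_word_append[of "t # mid" s post]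
    by (simp add: braid_eq.refl)
  also have "braid_eq n \<dots> ((?W (pre @ [t]) @ band_word t s) @ ?W (t # mid) @ ?W (s # post))"
    using braid_eq.cong[OF block_word_arc[OF sorted_arc \<open>1 \<le> s\<close> \<open>t \<le> n\<close>],
        of "?W (pre @ [t])" "?W (s # post)"] by simp
  also have "braid_eq n \<dots> (band_word t s @ (?W (pre @ [s]) @ ?W (t # mid)) @ ?W (s # post))"
  proof -
    have "set pre \<subseteq> {..n}" using pre by auto
    from braid_eq.cong[OF block_word_snoc_band_word[OF sorted_pre_t \<open>1 \<le> s\<close> assms(5) this],
        of "[]" "?W (t # mid) @ ?W (s # post)"]
    show ?thesis by simp
  qed
  also have "braid_eq n \<dots> (band_word t s @ (?W (t # mid) @ ?W (pre @ [s])) @ ?W (s # post))"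
    using braid_eq_swap[OF commute_block_words_nested[OF sorted_pre_s _ pre mid \<open>1 \<le> s\<close> assms(5)]]
      sorted_arc by (simp add: sorted_wrt_append)
  finally show ?thesis
    using block_split_decomp[OF assms(1)[unfolded L]] block_word_append[of pre s post] unfolding L by simp
qed

lemma partition_word_split:
  assumes "noncrossing_partition n (P1 @ L # P2)" "t \<in> set L" "s \<in> set L" "s < t"
  shows "braid_eq n (eval_band (partition_word (P1 @ L # P2)))
    (band_word t s @ eval_band (partition_word (P1 @ block_split t s L @ P2)))"
proof -
  have L: "sorted_wrt (>) L" "set L \<subseteq> {1..n}"
    using noncrossing_partition_block[OF assms(1)] by auto
  let ?W = "\<lambda>P. eval_band (partition_word P)"
  have "commute n (?W P1) (eval_band [(t, s)])"
  proof (rule commute_eval_band)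
    fix p q r q' assume pq: "(p, q) \<in> set (partition_word P1)" and "(r, q') \<in> set [(t, s)]"
    then have rq': "r = t" "q' = s" by auto
    obtain C where C: "C \<in> set P1" "(p, q) \<in> set (block_word C)"
      using partition_word_letters[OF pq] by blast
    have "sorted_wrt (>) C" "set C \<subseteq> {1..n}"
      using noncrossing_partition_block[OF assms(1), of C] C(1) by auto
    then have "p \<in> set C" "q \<in> set C" "q < p" "p \<le> n" "1 \<le> q"
      using block_word_letters[OF _ C(2)] by auto
    moreover note other = noncrossing_partition_other_block[OF assms(1), of C]
    ultimately have "p \<in> {s<..t} \<longleftrightarrow> q \<in> {s<..t}" "{p, q} \<inter> {s, t} = {}"
      using noncrossing_same_side[of "set L" "set C" s t p q] assms(2-4) C(1) by auto
    then show "commute n (band_word p q) (band_word r q')"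
      using \<open>q < p\<close> \<open>p \<le> n\<close> \<open>1 \<le> q\<close> L assms(2-4) rq'
      by (intro commute_band_words_same_side) auto
  qed
  have "braid_eq n (?W (P1 @ L # P2)) (?W P1 @ (band_word t s @ ?W (block_split t s L)) @ ?W P2)"
    using braid_eq.cong[OF block_word_split[OF L assms(2-4)], of "?W P1" "?W P2"] by simp
  also have "braid_eq n \<dots> ((band_word t s @ ?W P1) @ ?W (block_split t s L) @ ?W P2)"
    using braid_eq_swap[OF \<open>commute n (?W P1) (eval_band [(t, s)])\<close>, of "[]"] by simp
  finally show ?thesis by simp
qed

definition obstruction_free :: "nat \<Rightarrow> (nat \<times> nat) list \<Rightarrow> bool" where
  "obstruction_free n A \<longleftrightarrow> \<not> (\<exists>B a C b D. A = B @ [a] @ C @ [b] @ D \<and> obstructing n a b)"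

lemma obstruction_free_Nil [simp]: "obstruction_free n []"
  by (simp add: obstruction_free_def)

lemma obstruction_free_Cons:
  "obstruction_free n (a # A) \<longleftrightarrow> (\<forall>b\<in>set A. \<not> obstructing n a b) \<and> obstruction_free n A"
proof -
  have "(\<exists>B a' C b D. a # A = B @ [a'] @ C @ [b] @ D \<and> obstructing n a' b) \<longleftrightarrow>
      (\<exists>b\<in>set A. obstructing n a b) \<or> (\<exists>B a' C b D. A = B @ [a'] @ C @ [b] @ D \<and> obstructing n a' b)"
  proof
    assume "\<exists>B a' C b D. a # A = B @ [a'] @ C @ [b] @ D \<and> obstructing n a' b"
    then obtain B a' C b D where eq: "a # A = B @ [a'] @ C @ [b] @ D" and obs: "obstructing n a' b"
      by blast
    show "(\<exists>b\<in>set A. obstructing n a b) \<or> (\<exists>B a' C b D. A = B @ [a'] @ C @ [b] @ D \<and> obstructing n a' b)"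
    proof (cases B)
      case Nil
      then show ?thesis using eq obs by auto
    next
      case (Cons x B')
      then have "A = B' @ [a'] @ C @ [b] @ D" using eq by simp
      then show ?thesis using obs by blast
    qed
  next
    assume "(\<exists>b\<in>set A. obstructing n a b) \<or> (\<exists>B a' C b D. A = B @ [a'] @ C @ [b] @ D \<and> obstructing n a' b)"
    then show "\<exists>B a' C b D. a # A = B @ [a'] @ C @ [b] @ D \<and> obstructing n a' b"
      by (metis append_Cons append_Nil split_list)
  qed
  then show ?thesis
    unfolding obstruction_free_def by blast
qed

lemma obstruction_free_infix: "obstruction_free n (X @ A @ Y) \<Longrightarrow> obstruction_free n A"
  unfolding obstruction_free_def by (metis append.assoc)

lemma partition_word_prefix:
  assumes "noncrossing_partition n P" "set A \<subseteq> band_gens n" "\<forall>a\<in>set A. within_block P a"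
    and "obstruction_free n A"
  shows "\<exists>Q. positive_word n Q \<and> braid_eq n (eval_band (partition_word P)) (eval_band A @ eval_band Q)"
  using assms
proof (induction A arbitrary: P)
  case Nil
  then show ?case
    using partition_word_positive by (auto intro: braid_eq.refl)
next
  case (Cons a A)
  obtain t s where a: "a = (t, s)" by fastforce
  obtain L where "L \<in> set P" "t \<in> set L" "s \<in> set L"
    using Cons.prems(3) a unfolding within_block_def by auto
  then obtain P1 P2 where P: "P = P1 @ L # P2"
    using split_list by metis
  have "s < t" using Cons.prems(2) a unfolding band_gens_def by auto
  let ?P' = "P1 @ block_split t s L @ P2"
  have "noncrossing_partition n ?P'"
    using noncrossing_partition_split Cons.prems(1) P \<open>t \<in> set L\<close> \<open>s \<in> set L\<close> \<open>s < t\<close> by blast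
  moreover have "obstruction_free n A" and unobstructed: "\<forall>b\<in>set A. \<not> obstructing n a b"
    using Cons.prems(4) by (simp_all add: obstruction_free_Cons)
  moreover have "\<forall>b\<in>set A. within_block ?P' b"
    using within_block_split_iff Cons.prems(1-3) unobstructed P \<open>t \<in> set L\<close> \<open>s \<in> set L\<close> \<open>s < t\<close> a
    by auto
  moreover have "set A \<subseteq> band_gens n"
    using Cons.prems(2) by simp
  ultimately obtain Q where Q: "positive_word n Q"
    "braid_eq n (eval_band (partition_word ?P')) (eval_band A @ eval_band Q)"
    using Cons.IH by blast
  have "braid_eq n (eval_band (partition_word P)) (band_word t s @ eval_band (partition_word ?P'))"
    using partition_word_split Cons.prems(1) P \<open>t \<in> set L\<close> \<open>s \<in> set L\<close> \<open>s < t\<close> by blast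
  also have "braid_eq n \<dots> (band_word t s @ eval_band A @ eval_band Q)"
    using braid_eq_append[OF braid_eq.refl Q(2)] .
  finally show ?case
    using Q(1) a by auto
qed

section \<open>Short factorizations of partition permutations\<close>

primrec word_perm :: "art_word \<Rightarrow> nat \<Rightarrow> nat" where
  "word_perm [] = id"
| "word_perm (l # w) = Transposition.transpose (fst l) (Suc (fst l)) \<circ> word_perm w"

lemma word_perm_append [simp]: "word_perm (u @ v) = word_perm u \<circ> word_perm v"
  by (induction u) auto

lemma braid_eq_word_perm: "braid_eq n u v \<Longrightarrow> word_perm u = word_perm v"
  by (induction rule: braid_eq.induct) (auto simp: fun_eq_iff transpose_def)

lemma word_perm_band_word:
  assumes "s < t"
  shows "word_perm (band_word t s) = Transposition.transpose s t"
  using Suc_leI[OF assms]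
proof (induction t rule: dec_induct)
  case base
  then show ?case by (simp add: band_word_Suc_self)
next
  case (step m)
  then show ?case by (simp add: band_word_Suc fun_eq_iff transpose_def)
qed

lemma word_perm_eval_band_Cons:
  "s < t \<Longrightarrow> word_perm (eval_band ((t, s) # T)) = Transposition.transpose s t \<circ> word_perm (eval_band T)"
  by (simp add: word_perm_band_word)

lemma word_perm_block_word_outside:
  "sorted_wrt (>) L \<Longrightarrow> z \<notin> set L \<Longrightarrow> word_perm (eval_band (block_word L)) z = z"
  by (induction L rule: induct_list012) (auto simp: word_perm_band_word)

lemma word_perm_block_word_next:
  "sorted_wrt (>) L \<Longrightarrow> Suc i < length L \<Longrightarrow> word_perm (eval_band (block_word L)) (L ! i) = L ! Suc i"
proof (induction L arbitrary: i rule: induct_list012)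
  case (3 x y L)
  have perm: "word_perm (eval_band (block_word (x # y # L))) =
      Transposition.transpose y x \<circ> word_perm (eval_band (block_word (y # L)))"
    using 3 by (simp add: word_perm_band_word)
  show ?case
  proof (cases i)
    case 0
    then show ?thesis
      using perm word_perm_block_word_outside[of "y # L" x] 3 by auto
  next
    case (Suc j)
    then have "word_perm (eval_band (block_word (y # L))) ((y # L) ! j) = (y # L) ! Suc j"
      using 3 by simp
    moreover have "L ! j \<in> set L"
      using 3 Suc by simp
    then have "L ! j < y" "L ! j < x"
      using 3 by auto
    ultimately show ?thesis
      using perm Suc by simp
  qed
qed auto

lemma word_perm_partition_word_outside:
  "\<forall>C\<in>set P. sorted_wrt (>) C \<Longrightarrow> z \<notin> set (concat P) \<Longrightarrow> word_perm (eval_band (partition_word P)) z = z"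
  by (induction P) (auto simp: word_perm_block_word_outside)

lemma word_perm_partition_word_next:
  assumes "\<forall>C\<in>set P. sorted_wrt (>) C" "distinct (concat P)" "L \<in> set P" "Suc i < length L"
  shows "word_perm (eval_band (partition_word P)) (L ! i) = L ! Suc i"
  using assms
proof (induction P)
  case (Cons C P)
  have "L ! i \<in> set L" "L ! Suc i \<in> set L"
    using Cons.prems(4) by auto
  show ?case
  proof (cases "L = C")
    case True
    then have "L ! i \<notin> set (concat P)"
      using Cons.prems(2) \<open>L ! i \<in> set L\<close> by auto
    then show ?thesis
      using True Cons.prems word_perm_partition_word_outside[of P] word_perm_block_word_next[of C i] by simp
  next
    case False
    then have "L \<in> set P" using Cons.prems(3) by simp
    then have "L ! Suc i \<notin> set C"
      using Cons.prems(2) \<open>L ! Suc i \<in> set L\<close> by auto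
    then show ?thesis
      using Cons \<open>L \<in> set P\<close> word_perm_block_word_outside[of C] by simp
  qed
qed simp

primrec exponent_sum :: "art_word \<Rightarrow> int" where
  "exponent_sum [] = 0"
| "exponent_sum (l # w) = (if snd l then 1 else -1) + exponent_sum w"

lemma exponent_sum_append [simp]: "exponent_sum (u @ v) = exponent_sum u + exponent_sum v"
  by (induction u) auto

lemma braid_eq_exponent_sum: "braid_eq n u v \<Longrightarrow> exponent_sum u = exponent_sum v"
  by (induction rule: braid_eq.induct) auto

lemma exponent_sum_eval_band: "exponent_sum (eval_band T) = int (length T)"
proof -
  have "exponent_sum (map (\<lambda>i. (i, b)) xs) = (if b then 1 else -1) * int (length xs)" for b xs
    by (induction xs) (auto simp: algebra_simps)
  then have "exponent_sum (band_word t s) = 1" for t s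
    by (simp add: band_word_def)
  then show ?thesis
    by (induction T) auto
qed

definition connected_in :: "('a \<times> 'a) list \<Rightarrow> 'a \<Rightarrow> 'a \<Rightarrow> bool" where
  "connected_in E x y \<longleftrightarrow> (x, y) \<in> (set E \<union> (set E)\<inverse>)\<^sup>*"

lemma connected_in_refl [simp]: "connected_in E x x"
  by (simp add: connected_in_def)

lemma connected_in_sym: "connected_in E x y \<Longrightarrow> connected_in E y x"
  unfolding connected_in_def
  by (metis converse_Un converse_converse converse_iff rtrancl_converse sup_commute)

lemma connected_in_trans: "connected_in E x y \<Longrightarrow> connected_in E y z \<Longrightarrow> connected_in E x z"
  unfolding connected_in_def by (rule rtrancl_trans)

lemma connected_in_edge: "(x, y) \<in> set E \<Longrightarrow> connected_in E x y"
  unfolding connected_in_def by auto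

lemma connected_in_Cons: "connected_in E x y \<Longrightarrow> connected_in (e # E) x y"
  unfolding connected_in_def by (rule rtrancl_mono[THEN subsetD]) auto

lemma connected_in_Nil: "connected_in [] x y \<longleftrightarrow> x = y"
  by (simp add: connected_in_def)

lemma connected_in_ConsE:
  assumes "connected_in ((a, b) # E) x y"
  shows "connected_in E x y \<or>
    ((connected_in E x a \<or> connected_in E x b) \<and> (connected_in E y a \<or> connected_in E y b))"
  using assms[unfolded connected_in_def]
proof (induction rule: rtrancl_induct)
  case (step y z)
  have "(y, z) = (a, b) \<or> (z, y) = (a, b) \<or> (y, z) \<in> set E \<or> (z, y) \<in> set E"
    using step(2) by auto
  then consider "connected_in E y z" | "y = a" "z = b" | "y = b" "z = a"
    by (metis Pair_inject connected_in_edge connected_in_sym)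
  then show ?case
  proof cases
    case 1
    then show ?thesis using step.IH by (meson connected_in_trans connected_in_sym)
  next
    case 2
    then show ?thesis using step.IH connected_in_sym by auto
  next
    case 3
    then show ?thesis using step.IH connected_in_sym by auto
  qed
qed simp

lemma exists_pairwise_disconnected_subset:
  assumes "finite V"
  shows "\<exists>S\<subseteq>V. card V \<le> card S + length E \<and> (\<forall>x\<in>S. \<forall>y\<in>S. connected_in E x y \<longrightarrow> x = y)"
proof (induction E)
  case Nil
  then show ?case by (auto simp: connected_in_Nil)
next
  case (Cons e E)
  obtain a b where e: "e = (a, b)" by fastforce
  obtain S where S: "S \<subseteq> V" "card V \<le> card S + length E" "\<forall>x\<in>S. \<forall>y\<in>S. connected_in E x y \<longrightarrow> x = y"
    using Cons.IH by blast
  define Z where "Z = {z\<in>S. connected_in E z a}"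
  have "finite S" using S(1) assms finite_subset by blast
  moreover have "Z \<subseteq> S" unfolding Z_def by auto
  moreover have "card Z \<le> 1"
  proof -
    have "x = y" if "x \<in> Z" "y \<in> Z" for x y
    proof -
      have "x \<in> S" "y \<in> S" "connected_in E x a" "connected_in E y a"
        using that unfolding Z_def by auto
      then show "x = y"
        using S(3) connected_in_trans connected_in_sym by metis
    qed
    then show ?thesis
      using card_le_Suc0_iff_eq[OF finite_subset[OF \<open>Z \<subseteq> S\<close> \<open>finite S\<close>]] by auto
  qed
  ultimately have card: "card V \<le> card (S - Z) + length (e # E)"
    using S(2) card_Diff_subset[of Z S] card_mono[of S Z] finite_subset[of Z S] by simp
  have "x = y" if "x \<in> S - Z" "y \<in> S - Z" "connected_in (e # E) x y" for x y
  proof (rule ccontr)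
    assume "x \<noteq> y"
    then have "\<not> connected_in E x y" "\<not> connected_in E x a" "\<not> connected_in E y a"
      using S(3) that(1,2) unfolding Z_def by auto
    moreover have "connected_in ((a, b) # E) x y"
      using that(3) e by simp
    ultimately have "connected_in E x b" "connected_in E y b"
      using connected_in_ConsE[of a b E x y] by (simp_all add: connected_in_sym)
    then show False
      using \<open>\<not> connected_in E x y\<close> connected_in_sym connected_in_trans by metis
  qed
  then show ?case
    using S(1) card by (intro exI[of _ "S - Z"]) auto
qed

lemma connected_in_word_perm:
  "\<forall>(t, s)\<in>set T. s < t \<Longrightarrow> connected_in T (word_perm (eval_band T) z) z"
proof (induction T)
  case (Cons a T)
  obtain t s where a: "a = (t, s)" by fastforce
  have "connected_in (a # T) (word_perm (eval_band T) z) z"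
    using Cons connected_in_Cons by auto
  moreover have "connected_in (a # T) (Transposition.transpose s t x) x" for x
    using connected_in_edge[of t s "a # T"] connected_in_sym a by (auto simp: transpose_def)
  moreover have "word_perm (eval_band (a # T)) z = Transposition.transpose s t (word_perm (eval_band T) z)"
    using Cons.prems a word_perm_eval_band_Cons[of s t T] by simp
  ultimately show ?case
    using connected_in_trans by metis
qed simp

lemma block_connected:
  assumes "noncrossing_partition n P" "\<forall>(t, s)\<in>set T. s < t"
    and "word_perm (eval_band T) = word_perm (eval_band (partition_word P))"
    and "L \<in> set P" "x \<in> set L" "y \<in> set L"
  shows "connected_in T x y"
proof -
  have sorted: "\<forall>C\<in>set P. sorted_wrt (>) C" and "distinct (concat P)"
    using assms(1) unfolding noncrossing_partition_def by auto
  have first: "connected_in T (L ! 0) (L ! i)" if "i < length L" for i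
    using that
  proof (induction i)
    case (Suc i)
    have "word_perm (eval_band T) (L ! i) = L ! Suc i"
      using assms(3) word_perm_partition_word_next[OF sorted \<open>distinct (concat P)\<close> assms(4) Suc.prems]
      by simp
    then have "connected_in T (L ! i) (L ! Suc i)"
      using connected_in_word_perm[OF assms(2), of "L ! i"] connected_in_sym by metis
    then show ?case
      using Suc connected_in_trans by simp
  qed simp
  obtain i j where "i < length L" "x = L ! i" "j < length L" "y = L ! j"
    using assms(5,6) by (auto simp: in_set_conv_nth)
  then show ?thesis
    using first connected_in_sym connected_in_trans by metis
qed

lemma card_disconnected_less_blocks:
  assumes S: "S \<subseteq> set (concat P)" "\<forall>x\<in>S. \<forall>y\<in>S. connected_in E x y \<longrightarrow> x = y"
    and blocks: "\<And>C x y. C \<in> set P \<Longrightarrow> x \<in> set C \<Longrightarrow> y \<in> set C \<Longrightarrow> connected_in E x y"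
    and L: "L \<in> set P" "t \<in> set L" and L': "L' \<in> set P" "s \<in> set L'"
    and "L \<noteq> L'" "connected_in E t s"
  shows "card S < card (set P)"
proof -
  define block where "block x = (SOME C. C \<in> set P \<and> x \<in> set C)" for x
  have block: "block x \<in> set P" "x \<in> set (block x)" if "x \<in> S" for x
  proof -
    have "\<exists>C. C \<in> set P \<and> x \<in> set C"
      using that S(1) by auto
    then show "block x \<in> set P" "x \<in> set (block x)"
      unfolding block_def by (metis (mono_tags, lifting) someI_ex)+
  qed
  have "inj_on block S"
  proof (rule inj_onI)
    fix x y assume "x \<in> S" "y \<in> S" "block x = block y"
    then have "connected_in E x y"
      using blocks[OF block[OF \<open>x \<in> S\<close>], of y] block(2)[OF \<open>y \<in> S\<close>] by simp
    then show "x = y"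
      using S(2) \<open>x \<in> S\<close> \<open>y \<in> S\<close> by blast
  qed
  have "L \<notin> block ` S \<or> L' \<notin> block ` S"
  proof (rule ccontr)
    assume "\<not> (L \<notin> block ` S \<or> L' \<notin> block ` S)"
    then obtain x y where x: "x \<in> S" "block x = L" and y: "y \<in> S" "block y = L'"
      by auto
    have "connected_in E x t" "connected_in E s y"
      using blocks[OF L(1) _ L(2)] blocks[OF L'(1) L'(2)] block x y by auto
    then have "connected_in E x y"
      using \<open>connected_in E t s\<close> connected_in_trans by metis
    then show False
      using S(2) x y \<open>L \<noteq> L'\<close> by blast
  qed
  then obtain M where "M \<in> set P" "block ` S \<subseteq> set P - {M}"
    using block L(1) L'(1) by blast
  then have "card (block ` S) < card (set P)"
    using card_mono[of "set P - {M}" "block ` S"] card_Diff1_less[of "set P" M] by simp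
  then show ?thesis
    using card_image[OF \<open>inj_on block S\<close>] by simp
qed

(* The graph on {1..n} whose edges are the letters of T has at least n - length T = length P
   components, and each block lies inside one of them; a letter joining two blocks would
   leave fewer components than blocks. *)
lemma letters_within_blocks:
  assumes P: "noncrossing_partition n P" and length: "length P + length T = n"
    and T: "set T \<subseteq> band_gens n"
    and perm: "word_perm (eval_band T) = word_perm (eval_band (partition_word P))"
    and "(t, s) \<in> set T"
  shows "within_block P (t, s)"
proof (rule ccontr)
  assume not_within: "\<not> within_block P (t, s)"
  have decreasing: "\<forall>(t, s)\<in>set T. s < t"
    using T unfolding band_gens_def by auto
  have cover: "set (concat P) = {1..n}"
    using P unfolding noncrossing_partition_def by simp
  have "(t, s) \<in> band_gens n"
    using assms(5) T by blast
  then have "t \<in> set (concat P)" "s \<in> set (concat P)"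
    using cover unfolding band_gens_def by auto
  then obtain L L' where L: "L \<in> set P" "t \<in> set L" and L': "L' \<in> set P" "s \<in> set L'"
    by auto
  have "L \<noteq> L'"
    using not_within L L' unfolding within_block_def by auto
  obtain S where S: "S \<subseteq> {1..n}" "n \<le> card S + length T"
    and disconnected: "\<forall>x\<in>S. \<forall>y\<in>S. connected_in T x y \<longrightarrow> x = y"
    using exists_pairwise_disconnected_subset[of "{1..n}" T] by force
  have "card S < card (set P)"
    using card_disconnected_less_blocks[OF _ disconnected block_connected[OF P decreasing perm] L L'
        \<open>L \<noteq> L'\<close> connected_in_edge[OF assms(5)]] S(1) cover by simp
  then show False
    using card_length[of P] S(2) length by linarith
qed

lemma word_perm_partition_word_split:
  assumes "noncrossing_partition n (P1 @ L # P2)" "t \<in> set L" "s \<in> set L" "s < t"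
    and "word_perm (eval_band ((t, s) # T)) = word_perm (eval_band (partition_word (P1 @ L # P2)))"
  shows "word_perm (eval_band T) = word_perm (eval_band (partition_word (P1 @ block_split t s L @ P2)))"
proof -
  have "Transposition.transpose s t \<circ> word_perm (eval_band T) =
      Transposition.transpose s t \<circ> word_perm (eval_band (partition_word (P1 @ block_split t s L @ P2)))"
    using assms(5) braid_eq_word_perm[OF partition_word_split[OF assms(1-4)]]
    by (simp add: word_perm_band_word[OF assms(4)])
  then show ?thesis
    by (auto simp: fun_eq_iff dest: transpose_eq_imp_eq)
qed

lemma permutation_factor_obstruction_free:
  assumes "noncrossing_partition n P" "length P + length T = n" "set T \<subseteq> band_gens n"
    and "word_perm (eval_band T) = word_perm (eval_band (partition_word P))"
  shows "obstruction_free n T"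
  using assms
proof (induction T arbitrary: P)
  case (Cons a T)
  obtain t s where a: "a = (t, s)" by fastforce
  then have "s < t" using Cons.prems(3) unfolding band_gens_def by auto
  obtain L where "L \<in> set P" "t \<in> set L" "s \<in> set L"
    using letters_within_blocks[OF Cons.prems(1-4), of t s] a unfolding within_block_def by auto
  then obtain P1 P2 where P: "P = P1 @ L # P2"
    using split_list by metis
  let ?P' = "P1 @ block_split t s L @ P2"
  have nc: "noncrossing_partition n ?P'"
    using noncrossing_partition_split Cons.prems(1) P \<open>t \<in> set L\<close> \<open>s \<in> set L\<close> \<open>s < t\<close> by blast
  have length: "length ?P' + length T = n"
    using Cons.prems(2) P by (simp add: block_split_def)
  have perm: "word_perm (eval_band T) = word_perm (eval_band (partition_word ?P'))"
    using word_perm_partition_word_split[OF _ \<open>t \<in> set L\<close> \<open>s \<in> set L\<close> \<open>s < t\<close>]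
      Cons.prems(1,4) P a by blast
  have "set T \<subseteq> band_gens n"
    using Cons.prems(3) by simp
  have "\<not> obstructing n a b" if "b \<in> set T" for b
  proof -
    obtain p q where b: "b = (p, q)" by fastforce
    have "within_block ?P' b"
      using letters_within_blocks[OF nc length \<open>set T \<subseteq> band_gens n\<close> perm] that b by simp
    moreover have "noncrossing_partition n (P1 @ L # P2)" "b \<in> band_gens n"
      using Cons.prems(1,3) P that by auto
    ultimately show ?thesis
      using within_block_split_iff[OF _ \<open>t \<in> set L\<close> \<open>s \<in> set L\<close> \<open>s < t\<close>]
        within_block_split_imp a b by blast
  qed
  then show ?case
    using Cons.IH[OF nc length \<open>set T \<subseteq> band_gens n\<close> perm] by (simp add: obstruction_free_Cons)
qed simp

lemma positive_word_0: "positive_word 0 A \<longleftrightarrow> A = []"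
proof -
  have "band_gens 0 = {}"
    unfolding band_gens_def by auto
  then show ?thesis
    unfolding positive_word_def by simp
qed

lemma obstruction_free_imp_canonical_factor:
  assumes "positive_word n A" "obstruction_free n A"
  shows "canonical_factor n A"
proof -
  have A: "set A \<subseteq> band_gens n"
    using assms(1) unfolding positive_word_def .
  have "braid_le n [] (eval_band A)"
    unfolding braid_le_def using assms(1)
    by (intro exI[of _ A] exI[of _ "[]"]) (auto simp: positive_word_def braid_eq.refl)
  moreover have "braid_le n (eval_band A) (eval_band (delta n))"
  proof (cases "n = 0")
    case True
    then have "A = []" using assms(1) positive_word_0 by simp
    then show ?thesis
      unfolding braid_le_def using True
      by (intro exI[of _ "[]"]) (auto simp: positive_word_def delta_def braid_eq.refl)
  next
    case False
    then have "noncrossing_partition n [rev [1..<Suc n]]" "\<forall>a\<in>set A. within_block [rev [1..<Suc n]] a"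
      using noncrossing_partition_single_block A unfolding within_block_def band_gens_def by auto
    then obtain Q where "positive_word n Q" "braid_eq n (eval_band (delta n)) (eval_band A @ eval_band Q)"
      using partition_word_prefix A assms(2) delta_eq_partition_word by metis
    then show ?thesis
      unfolding braid_le_def by (intro exI[of _ "[]"] exI[of _ Q]) (simp add: positive_word_def)
  qed
  ultimately show ?thesis
    unfolding canonical_factor_def ..
qed

lemma canonical_factor_imp_obstruction_free:
  assumes "positive_word n A" "canonical_factor n A"
  shows "obstruction_free n A"
proof (cases "n = 0")
  case True
  then have "A = []" using assms(1) positive_word_0 by simp
  then show ?thesis by simp
next
  case False
  obtain P1 P2 where P: "positive_word n P1" "positive_word n P2"
    and eq: "braid_eq n (eval_band (delta n)) (eval_band (P1 @ A @ P2))"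
    using assms(2) unfolding canonical_factor_def braid_le_def by auto
  have "int (length (delta n)) = int (length (P1 @ A @ P2))"
    using braid_eq_exponent_sum[OF eq] by (simp only: exponent_sum_eval_band)
  then have "length [rev [1..<Suc n]] + length (P1 @ A @ P2) = n"
    using False by (simp add: delta_def)
  moreover have "set (P1 @ A @ P2) \<subseteq> band_gens n"
    using P assms(1) unfolding positive_word_def by simp
  moreover have "word_perm (eval_band (P1 @ A @ P2)) = word_perm (eval_band (partition_word [rev [1..<Suc n]]))"
    using braid_eq_word_perm[OF eq] delta_eq_partition_word by simp
  ultimately have "obstruction_free n (P1 @ A @ P2)"
    using permutation_factor_obstruction_free[OF noncrossing_partition_single_block] False by simp
  then show ?thesis
    by (rule obstruction_free_infix)
qed

theorem corollary3p6:
  assumes "positive_word n A"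
  shows "canonical_factor n A \<longleftrightarrow>
    \<not> (\<exists>B a C b D. A = B @ [a] @ C @ [b] @ D \<and> obstructing n a b)"
  using obstruction_free_imp_canonical_factor[OF assms] canonical_factor_imp_obstruction_free[OF assms]
  unfolding obstruction_free_def by blast

end
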